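(* Let $G$ be a cubic graph with a bridge $e$, and let $H_1$ and $H_2$ be the components of $G-e$. Then $c_2(G)=c_2(H_1)+c_2(H_2)$.
   Context: For a graph $G=(V,E)$ and a set $S_0\subseteq V$, the irreversible $2$-threshold conversion process is defined by: for $t=1,2,\dots$, $S_t$ is obtained from $S_{t-1}$ by adjoining all vertices having at least $2$ neighbours in $S_{t-1}$. $S_0$ is a $2$-conversion set if $S_t=V$ for some $t\ge 0$, and $c_2(G)$ is the minimum size of a $2$-conversion set of $G$ (defined for any graph, not only cubic ones). *)

theory Defs
  imports Main
begin

definition simple_graph :: "'a set \<Rightarrow> 'a set set \<Rightarrow> bool" where
  "simple_graph V E \<longleftrightarrow> finite V \<and>
     (\<forall>e\<in>E. \<exists>u v. e = {u, v} \<and> u \<noteq> v \<and> u \<in> V \<and> v \<in> V)"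

definition degree :: "'a set \<Rightarrow> 'a set set \<Rightarrow> 'a \<Rightarrow> nat" where
  "degree V E v = card {u\<in>V. {u, v} \<in> E}"

definition cubic :: "'a set \<Rightarrow> 'a set set \<Rightarrow> bool" where
  "cubic V E \<longleftrightarrow> simple_graph V E \<and> (\<forall>v\<in>V. degree V E v = 3)"

definition adj :: "'a set \<Rightarrow> 'a set set \<Rightarrow> 'a \<Rightarrow> 'a \<Rightarrow> bool" where
  "adj V E u v \<longleftrightarrow> u \<in> V \<and> v \<in> V \<and> {u, v} \<in> E"

definition reachable :: "'a set \<Rightarrow> 'a set set \<Rightarrow> 'a \<Rightarrow> 'a \<Rightarrow> bool" where
  "reachable V E u v \<longleftrightarrow> u \<in> V \<and> (adj V E)\<^sup>*\<^sup>* u v"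

definition components :: "'a set \<Rightarrow> 'a set set \<Rightarrow> 'a set set" where
  "components V E = {{y. reachable V E x y} | x. x \<in> V}"

definition is_bridge :: "'a set \<Rightarrow> 'a set set \<Rightarrow> 'a set \<Rightarrow> bool" where
  "is_bridge V E e \<longleftrightarrow> e \<in> E \<and> card (components V (E - {e})) > card (components V E)"

definition induced_edges :: "'a set set \<Rightarrow> 'a set \<Rightarrow> 'a set set" where
  "induced_edges E C = {f \<in> E. f \<subseteq> C}"

definition conv_step :: "'a set \<Rightarrow> 'a set set \<Rightarrow> 'a set \<Rightarrow> 'a set" where
  "conv_step V E S = S \<union> {v\<in>V. card {u\<in>S. {u, v} \<in> E} \<ge> 2}"

definition is_2_conversion_set :: "'a set \<Rightarrow> 'a set set \<Rightarrow> 'a set \<Rightarrow> bool" where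
  "is_2_conversion_set V E S \<longleftrightarrow> S \<subseteq> V \<and> (\<exists>t. (conv_step V E ^^ t) S = V)"

definition c2 :: "'a set \<Rightarrow> 'a set set \<Rightarrow> nat" where
  "c2 V E = (LEAST n. \<exists>S. is_2_conversion_set V E S \<and> card S = n)"

end

theory Submission
  imports Defs
begin

text \<open>A set \<open>S\<close> fails to convert a finite graph exactly when there is a blocking set: a
  nonempty set \<open>U\<close> of vertices outside \<open>S\<close>, each with at most one neighbour outside \<open>U\<close>.
  A blocking set of \<open>G\<close> meets one side of the bridge in a blocking set of that side, so
  conversion sets of the two sides together convert \<open>G\<close>. Conversely, let \<open>S\<close> convert \<open>G\<close>
  and suppose \<open>U\<close> blocks \<open>S \<inter> H\<close> in a side \<open>H\<close>. Vertices of \<open>H\<close> have degree 3 there,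
  except the endpoint of the bridge, which has degree 2; so every vertex of \<open>U\<close> has two
  neighbours in \<open>U\<close>, except possibly that endpoint, which has one. Peeling off vertices with
  a single neighbour leaves a nonempty two-core \<open>W\<subseteq>U\<close>, in which every vertex has two
  neighbours; as \<open>G\<close> is cubic, \<open>W\<close> blocks \<open>S\<close> in \<open>G\<close>, a contradiction. Hence \<open>S \<inter> H\<close>
  converts \<open>H\<close> for both sides, and the two inequalities give the equality.\<close>

lemma degree_mono:
  "finite B \<Longrightarrow> A \<subseteq> B \<Longrightarrow> E \<subseteq> F \<Longrightarrow> degree A E v \<le> degree B F v"
  unfolding degree_def by (rule card_mono) auto

lemma degree_split:
  assumes "finite V" "U \<subseteq> V"
  shows "degree V E v = degree U E v + degree (V - U) E v"
proof -
  have "{u\<in>V. {u, v} \<in> E} = {u\<in>U. {u, v} \<in> E} \<union> {u\<in>V - U. {u, v} \<in> E}"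
    using assms(2) by blast
  moreover have "card ({u\<in>U. {u, v} \<in> E} \<union> {u\<in>V - U. {u, v} \<in> E})
      = card {u\<in>U. {u, v} \<in> E} + card {u\<in>V - U. {u, v} \<in> E}"
    using assms by (intro card_Un_disjoint) (auto intro: finite_subset)
  ultimately show ?thesis
    unfolding degree_def by simp
qed

lemma degree_Diff_singleton_nonadjacent:
  "{x, v} \<notin> E \<Longrightarrow> degree (U - {x}) E v = degree U E v"
  unfolding degree_def by (rule arg_cong[where f = card]) auto

lemma degree_le_Suc_degree_Diff_singleton:
  assumes "finite U"
  shows "degree U E v \<le> Suc (degree (U - {x}) E v)"
proof -
  have "{u\<in>U. {u, v} \<in> E} \<subseteq> insert x {u\<in>U - {x}. {u, v} \<in> E}" by blast
  then have "degree U E v \<le> card (insert x {u\<in>U - {x}. {u, v} \<in> E})"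
    unfolding degree_def using assms by (intro card_mono) auto
  also have "\<dots> \<le> Suc (degree (U - {x}) E v)"
    unfolding degree_def using assms by (simp add: card_insert_if)
  finally show ?thesis .
qed

section \<open>Blocking sets\<close>

lemma conv_step_eq: "conv_step V E S = S \<union> {v\<in>V. 2 \<le> degree S E v}"
  by (simp add: conv_step_def degree_def)

lemma conv_step_iter_subset: "S \<subseteq> V \<Longrightarrow> (conv_step V E ^^ t) S \<subseteq> V"
  by (induction t) (auto simp: conv_step_def)

lemma subset_conv_step_iter: "S \<subseteq> (conv_step V E ^^ t) S"
  by (induction t) (auto simp: conv_step_def)

lemma conv_step_iter_stabilizes:
  assumes "finite V" "S \<subseteq> V"
  shows "\<exists>t. conv_step V E ((conv_step V E ^^ t) S) = (conv_step V E ^^ t) S"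
proof (rule ccontr)
  assume no_fixpoint: "\<not> ?thesis"
  have "t \<le> card ((conv_step V E ^^ t) S)" for t
  proof (induction t)
    case (Suc t)
    let ?T = "(conv_step V E ^^ t) S"
    have "?T \<subset> conv_step V E ?T"
      using no_fixpoint by (auto simp: conv_step_def)
    moreover have "finite (conv_step V E ?T)"
      using conv_step_iter_subset[OF assms(2), where t = "Suc t"] assms(1)
      by (auto intro: finite_subset)
    ultimately have "card ?T < card (conv_step V E ?T)"
      by (rule psubset_card_mono[rotated])
    with Suc.IH show ?case by simp
  qed simp
  moreover have "card ((conv_step V E ^^ Suc (card V)) S) \<le> card V"
    using assms by (intro card_mono conv_step_iter_subset)
  ultimately show False
    by (metis not_less_eq_eq)
qed

definition blocking_set :: "'a set \<Rightarrow> 'a set set \<Rightarrow> 'a set \<Rightarrow> 'a set \<Rightarrow> bool" where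
  "blocking_set V E S U \<longleftrightarrow> U \<noteq> {} \<and> U \<subseteq> V - S \<and> (\<forall>v\<in>U. degree (V - U) E v \<le> 1)"

lemma conv_step_disjoint_blocking_set:
  assumes "finite V" "blocking_set V E S U" "T \<subseteq> V" "T \<inter> U = {}"
  shows "conv_step V E T \<inter> U = {}"
proof -
  have "degree T E v \<le> 1" if "v \<in> U" for v
  proof -
    have "degree T E v \<le> degree (V - U) E v"
      using assms by (intro degree_mono) auto
    also have "\<dots> \<le> 1"
      using assms(2) that by (auto simp: blocking_set_def)
    finally show ?thesis .
  qed
  then show ?thesis
    using assms(4) by (force simp: conv_step_eq)
qed

lemma conv_step_iter_disjoint_blocking_set:
  assumes "finite V" "S \<subseteq> V" "blocking_set V E S U"
  shows "(conv_step V E ^^ t) S \<inter> U = {}"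
proof (induction t)
  case 0
  then show ?case
    using assms(3) by (auto simp: blocking_set_def)
next
  case (Suc t)
  then show ?case
    using conv_step_disjoint_blocking_set[OF assms(1,3) conv_step_iter_subset[OF assms(2)]]
    by simp
qed

theorem is_2_conversion_set_iff_no_blocking_set:
  assumes "finite V"
  shows "is_2_conversion_set V E S \<longleftrightarrow> S \<subseteq> V \<and> (\<nexists>U. blocking_set V E S U)"
proof (intro iffI conjI notI)
  assume conv: "is_2_conversion_set V E S"
  then show "S \<subseteq> V"
    by (simp add: is_2_conversion_set_def)
  assume "\<exists>U. blocking_set V E S U"
  then obtain U where U: "blocking_set V E S U" ..
  obtain t where "(conv_step V E ^^ t) S = V"
    using conv by (auto simp: is_2_conversion_set_def)
  then show False
    using conv_step_iter_disjoint_blocking_set[OF assms \<open>S \<subseteq> V\<close> U, of t] U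
    by (auto simp: blocking_set_def)
next
  assume "S \<subseteq> V \<and> (\<nexists>U. blocking_set V E S U)"
  then have S: "S \<subseteq> V" and no_blocking: "\<nexists>U. blocking_set V E S U" by auto
  obtain t where fixpoint: "conv_step V E ((conv_step V E ^^ t) S) = (conv_step V E ^^ t) S"
    using conv_step_iter_stabilizes[OF assms S] ..
  define T where "T = (conv_step V E ^^ t) S"
  have "T \<subseteq> V" "S \<subseteq> T"
    by (simp_all add: T_def conv_step_iter_subset[OF S] subset_conv_step_iter)
  have "degree (V - (V - T)) E v \<le> 1" if "v \<in> V - T" for v
    using fixpoint that \<open>T \<subseteq> V\<close> by (auto simp: conv_step_eq T_def double_diff)
  then have "V - T = {}"
    using no_blocking \<open>S \<subseteq> T\<close> by (auto simp: blocking_set_def)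
  then show "is_2_conversion_set V E S"
    using S \<open>T \<subseteq> V\<close> by (auto simp: is_2_conversion_set_def T_def)
qed

section \<open>Two-cores\<close>

text \<open>Peeling: while the exceptional vertex \<open>x\<close> has a single neighbour \<open>y\<close> in \<open>U\<close>,
  delete \<open>x\<close>; then \<open>y\<close> loses one neighbour and becomes the new exceptional vertex.\<close>

lemma two_core_exists:
  assumes "finite U" "U \<noteq> {}" "\<And>v. {v} \<notin> E"
    and "\<And>v. v \<in> U \<Longrightarrow> v \<noteq> x \<Longrightarrow> 2 \<le> degree U E v"
    and "x \<in> U \<Longrightarrow> 1 \<le> degree U E x"
  shows "\<exists>W\<subseteq>U. W \<noteq> {} \<and> (\<forall>v\<in>W. 2 \<le> degree W E v)"
  using assms(1,2,4,5)
proof (induction "card U" arbitrary: U x rule: less_induct)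
  case less
  show ?case
  proof (cases "x \<in> U \<and> degree U E x < 2")
    case False
    then show ?thesis
      using less.prems by (metis not_less order.refl)
  next
    case True
    then have "x \<in> U" "card {u\<in>U. {u, x} \<in> E} = 1"
      using less.prems(4) by (auto simp: degree_def)
    then obtain y where y: "{u\<in>U. {u, x} \<in> E} = {y}"
      using card_1_singletonE by blast
    then have "y \<in> U" "{y, x} \<in> E" by auto
    with assms(3) have "y \<noteq> x" by force
    let ?U = "U - {x}"
    have "\<exists>W\<subseteq>?U. W \<noteq> {} \<and> (\<forall>v\<in>W. 2 \<le> degree W E v)"
    proof (rule less.hyps[where x = y])
      show "card ?U < card U"
        using less.prems(1) \<open>x \<in> U\<close> by (rule card_Diff1_less)
      show "finite ?U" "?U \<noteq> {}"
        using less.prems(1) \<open>y \<in> U\<close> \<open>y \<noteq> x\<close> by auto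
      show "2 \<le> degree ?U E v" if "v \<in> ?U" "v \<noteq> y" for v
      proof -
        have "{x, v} \<notin> E"
          using y that by (auto simp: insert_commute)
        then show ?thesis
          using less.prems(3) that by (simp add: degree_Diff_singleton_nonadjacent)
      qed
      show "1 \<le> degree ?U E y"
        using less.prems(3)[OF \<open>y \<in> U\<close> \<open>y \<noteq> x\<close>]
          degree_le_Suc_degree_Diff_singleton[OF less.prems(1), of E y x]
        by linarith
    qed
    then show ?thesis by blast
  qed
qed

lemma blocking_set_if_two_core:
  assumes "finite V" "W \<subseteq> V - S" "W \<noteq> {}"
    and "\<And>v. v \<in> W \<Longrightarrow> degree V E v \<le> 3"
    and "\<And>v. v \<in> W \<Longrightarrow> 2 \<le> degree W E v"
  shows "blocking_set V E S W"
  unfolding blocking_set_def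
proof (intro conjI ballI)
  fix v
  assume "v \<in> W"
  then show "degree (V - W) E v \<le> 1"
    using assms degree_split[OF assms(1), of W E v] by fastforce
qed (use assms in auto)

lemma blocking_set_restrict:
  assumes "finite V" "blocking_set V E S U" "H \<subseteq> V" "E' \<subseteq> E" "S' \<subseteq> S" "U \<inter> H \<noteq> {}"
  shows "blocking_set H E' S' (U \<inter> H)"
  unfolding blocking_set_def
proof (intro conjI ballI)
  fix v
  assume "v \<in> U \<inter> H"
  have "degree (H - U \<inter> H) E' v \<le> degree (V - U) E v"
    using assms by (intro degree_mono) auto
  also have "\<dots> \<le> 1"
    using assms(2) \<open>v \<in> U \<inter> H\<close> by (auto simp: blocking_set_def)
  finally show "degree (H - U \<inter> H) E' v \<le> 1" .
qed (use assms in \<open>auto simp: blocking_set_def\<close>)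

lemma is_2_conversion_set_Un:
  assumes "finite V" "V = H\<^sub>1 \<union> H\<^sub>2" "E\<^sub>1 \<subseteq> E" "E\<^sub>2 \<subseteq> E"
    and "is_2_conversion_set H\<^sub>1 E\<^sub>1 S\<^sub>1" "is_2_conversion_set H\<^sub>2 E\<^sub>2 S\<^sub>2"
  shows "is_2_conversion_set V E (S\<^sub>1 \<union> S\<^sub>2)"
proof -
  have "finite H\<^sub>1" "finite H\<^sub>2"
    using assms(1,2) by auto
  have "\<not> blocking_set V E (S\<^sub>1 \<union> S\<^sub>2) U" for U
  proof
    assume U: "blocking_set V E (S\<^sub>1 \<union> S\<^sub>2) U"
    then consider "U \<inter> H\<^sub>1 \<noteq> {}" | "U \<inter> H\<^sub>2 \<noteq> {}"
      using assms(2) by (auto simp: blocking_set_def)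
    then show False
    proof cases
      case 1
      then have "blocking_set H\<^sub>1 E\<^sub>1 S\<^sub>1 (U \<inter> H\<^sub>1)"
        using assms by (intro blocking_set_restrict[OF _ U]) auto
      then show False
        using assms(5) is_2_conversion_set_iff_no_blocking_set[OF \<open>finite H\<^sub>1\<close>] by blast
    next
      case 2
      then have "blocking_set H\<^sub>2 E\<^sub>2 S\<^sub>2 (U \<inter> H\<^sub>2)"
        using assms by (intro blocking_set_restrict[OF _ U]) auto
      then show False
        using assms(6) is_2_conversion_set_iff_no_blocking_set[OF \<open>finite H\<^sub>2\<close>] by blast
    qed
  qed
  moreover have "S\<^sub>1 \<union> S\<^sub>2 \<subseteq> V"
    using assms by (auto simp: is_2_conversion_set_def)
  ultimately show ?thesis
    using is_2_conversion_set_iff_no_blocking_set[OF assms(1)] by blast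
qed

text \<open>The degree hypotheses describe one side \<open>H\<close> of a bridge in a cubic graph, whose
  endpoint \<open>a\<close> in \<open>H\<close> is the only vertex losing a neighbour.\<close>

lemma is_2_conversion_set_restrict:
  assumes "finite V" "H \<subseteq> V" "E' \<subseteq> E" "\<And>v. {v} \<notin> E'"
    and "\<And>v. v \<in> H \<Longrightarrow> degree V E v \<le> 3"
    and "\<And>v. v \<in> H \<Longrightarrow> v \<noteq> a \<Longrightarrow> 3 \<le> degree H E' v"
    and "2 \<le> degree H E' a"
    and "is_2_conversion_set V E S"
  shows "is_2_conversion_set H E' (S \<inter> H)"
proof -
  have "finite H"
    using assms(1,2) by (rule finite_subset[rotated])
  have "\<not> blocking_set H E' (S \<inter> H) U" for U
  proof
    assume U: "blocking_set H E' (S \<inter> H) U"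
    then have "U \<subseteq> H" "U \<noteq> {}" "finite U"
      using \<open>finite H\<close> by (auto simp: blocking_set_def intro: finite_subset)
    have degree_in_U: "degree H E' v \<le> degree U E' v + 1" if "v \<in> U" for v
      using degree_split[OF \<open>finite H\<close> \<open>U \<subseteq> H\<close>, of E' v] U that by (auto simp: blocking_set_def)
    have "\<exists>W\<subseteq>U. W \<noteq> {} \<and> (\<forall>v\<in>W. 2 \<le> degree W E' v)"
    proof (rule two_core_exists[OF \<open>finite U\<close> \<open>U \<noteq> {}\<close> assms(4), where x = a])
      show "2 \<le> degree U E' v" if "v \<in> U" "v \<noteq> a" for v
        using degree_in_U[of v] assms(6)[of v] that \<open>U \<subseteq> H\<close> by auto
      show "1 \<le> degree U E' a" if "a \<in> U"
        using degree_in_U[OF that] assms(7) by linarith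
    qed
    then obtain W where W: "W \<subseteq> U" "W \<noteq> {}" "\<And>v. v \<in> W \<Longrightarrow> 2 \<le> degree W E' v"
      by blast
    have "blocking_set V E S W"
    proof (rule blocking_set_if_two_core[OF assms(1)])
      show "W \<subseteq> V - S" "W \<noteq> {}" "\<And>v. v \<in> W \<Longrightarrow> degree V E v \<le> 3"
        using W U \<open>U \<subseteq> H\<close> assms(2,5) by (auto simp: blocking_set_def)
      show "2 \<le> degree W E v" if "v \<in> W" for v
      proof -
        have "degree W E' v \<le> degree W E v"
          using W(1) \<open>finite U\<close> assms(3) by (intro degree_mono) (auto intro: finite_subset)
        with W(3)[OF that] show ?thesis by linarith
      qed
    qed
    then show False
      using assms(8) is_2_conversion_set_iff_no_blocking_set[OF assms(1)] by blast
  qed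
  then show ?thesis
    using is_2_conversion_set_iff_no_blocking_set[OF \<open>finite H\<close>] by blast
qed

section \<open>Components and bridges\<close>

lemma simple_graph_edge_subset: "simple_graph V E \<Longrightarrow> f \<in> E \<Longrightarrow> f \<subseteq> V"
  by (auto simp: simple_graph_def)

lemma simple_graph_no_loop: "simple_graph V E \<Longrightarrow> {v} \<notin> E"
  by (auto simp: simple_graph_def doubleton_eq_iff)

lemma symp_adj: "symp (adj V E)"
  by (auto simp: symp_def adj_def insert_commute)

lemma adj_rtranclp_in_vertices: "(adj V E)\<^sup>*\<^sup>* u v \<Longrightarrow> u \<in> V \<Longrightarrow> v \<in> V"
  by (induction rule: rtranclp_induct) (auto simp: adj_def)

lemma component_eq_reachable_from:
  assumes "C \<in> components V E" "x \<in> C"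
  shows "C = {y. (adj V E)\<^sup>*\<^sup>* x y}"
proof -
  obtain x\<^sub>0 where "x\<^sub>0 \<in> V" and C: "C = {y. (adj V E)\<^sup>*\<^sup>* x\<^sub>0 y}"
    using assms(1) by (auto simp: components_def reachable_def)
  then have "(adj V E)\<^sup>*\<^sup>* x\<^sub>0 x"
    using assms(2) by simp
  moreover from this have "(adj V E)\<^sup>*\<^sup>* x x\<^sub>0"
    by (rule sympD[OF symp_rtranclp[OF symp_adj]])
  ultimately show ?thesis
    unfolding C by (auto intro: rtranclp_trans)
qed

lemma Union_components: "\<Union> (components V E) = V"
  by (auto simp: components_def reachable_def dest: adj_rtranclp_in_vertices)

lemma components_disjoint:
  "C \<in> components V E \<Longrightarrow> D \<in> components V E \<Longrightarrow> C \<noteq> D \<Longrightarrow> C \<inter> D = {}"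
  using component_eq_reachable_from[of C V E] component_eq_reachable_from[of D V E] by blast

lemma component_closed: "C \<in> components V E \<Longrightarrow> u \<in> C \<Longrightarrow> adj V E u v \<Longrightarrow> v \<in> C"
  using component_eq_reachable_from[of C V E u] by auto
lemma bridge_endpoints_separated:
  assumes "is_bridge V E e" "e = {a, b}" "C \<in> components V (E - {e})" "a \<in> C"
  shows "b \<notin> C"
proof
  assume "b \<in> C"
  let ?R = "adj V (E - {e})"
  have "C = {y. ?R\<^sup>*\<^sup>* a y}" "C = {y. ?R\<^sup>*\<^sup>* b y}"
    using assms(3,4) \<open>b \<in> C\<close> by (simp_all add: component_eq_reachable_from)
  then have "?R\<^sup>*\<^sup>* a b" "?R\<^sup>*\<^sup>* b a"
    using assms(4) \<open>b \<in> C\<close> by blast+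
  have "?R\<^sup>*\<^sup>* u v" if "adj V E u v" for u v
  proof (cases "{u, v} = e")
    case True
    then have "u = a \<and> v = b \<or> u = b \<and> v = a"
      using assms(2) by (simp add: doubleton_eq_iff)
    with \<open>?R\<^sup>*\<^sup>* a b\<close> \<open>?R\<^sup>*\<^sup>* b a\<close> show ?thesis by blast
  next
    case False
    with that have "?R u v"
      by (simp add: adj_def)
    then show ?thesis ..
  qed
  then have "(adj V E)\<^sup>*\<^sup>* = ?R\<^sup>*\<^sup>*"
    by (intro rtranclp_subset) (auto simp: adj_def)
  then have "components V E = components V (E - {e})"
    by (simp add: components_def reachable_def)
  with assms(1) show False
    by (simp add: is_bridge_def)
qed

lemma degree_bridge_side:
  assumes "cubic V E" "is_bridge V E e" "e = {a, b}"
    and "H \<in> components V (E - {e})" "a \<in> H" "v \<in> H"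
  shows "degree H (induced_edges (E - {e}) H) v = (if v = a then 2 else 3)"
proof -
  have "H \<subseteq> V"
    using Union_components[of V "E - {e}"] assms(4) by blast
  have "b \<notin> H"
    using bridge_endpoints_separated[OF assms(2-5)] .
  have "simple_graph V E" "e \<in> E"
    using assms(1,2) by (simp_all add: cubic_def is_bridge_def)
  then have "finite V" "b \<in> V"
    using assms(3) simple_graph_edge_subset by (auto simp: simple_graph_def)
  have other_side: "u \<in> H" if "u \<in> V" "{u, v} \<in> E" "{u, v} \<noteq> e" for u
  proof -
    have "adj V (E - {e}) v u"
      using that assms(6) \<open>H \<subseteq> V\<close> by (auto simp: adj_def insert_commute)
    then show ?thesis
      using component_closed[OF assms(4,6)] by blast
  qed
  define N where "N = {u\<in>V. {u, v} \<in> E}"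
  have "{u\<in>H. {u, v} \<in> induced_edges (E - {e}) H} = N - {b}"
  proof (intro equalityI subsetI)
    fix u
    assume "u \<in> N - {b}"
    moreover have "v \<noteq> b"
      using assms(6) \<open>b \<notin> H\<close> by blast
    ultimately have "u \<in> V" "{u, v} \<in> E" "{u, v} \<noteq> e"
      using assms(3) by (auto simp: N_def doubleton_eq_iff)
    then show "u \<in> {u\<in>H. {u, v} \<in> induced_edges (E - {e}) H}"
      using other_side assms(6) by (auto simp: induced_edges_def)
  qed (use \<open>H \<subseteq> V\<close> \<open>b \<notin> H\<close> in \<open>auto simp: N_def induced_edges_def\<close>)
  moreover have "b \<in> N \<longleftrightarrow> v = a"
  proof
    assume "b \<in> N"
    then have "{b, v} = e"
      using other_side[of b] \<open>b \<notin> H\<close> by (auto simp: N_def)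
    then show "v = a"
      using assms(3,6) \<open>b \<notin> H\<close> by (auto simp: doubleton_eq_iff)
  qed (use \<open>e \<in> E\<close> \<open>b \<in> V\<close> assms(3) in \<open>auto simp: N_def insert_commute\<close>)
  moreover have "card N = 3" "finite N"
    using assms(1,6) \<open>H \<subseteq> V\<close> \<open>finite V\<close> by (auto simp: cubic_def degree_def N_def)
  ultimately show ?thesis
    by (simp add: degree_def card_Diff_singleton_if)
qed


lemma bridge_joins_components:
  assumes "simple_graph V E" "is_bridge V E e" "components V (E - {e}) = {H\<^sub>1, H\<^sub>2}"
  obtains a b where "e = {a, b}" "a \<in> H\<^sub>1" "b \<in> H\<^sub>2"
proof -
  obtain u v where e: "e = {u, v}" "u \<in> V" "v \<in> V"
    using assms(1,2) by (auto simp: simple_graph_def is_bridge_def)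
  have "V = H\<^sub>1 \<union> H\<^sub>2"
    using Union_components[of V "E - {e}"] assms(3) by simp
  moreover have "e = {v, u}"
    using e(1) by (simp add: insert_commute)
  ultimately consider "u \<in> H\<^sub>1" "v \<in> H\<^sub>2" | "v \<in> H\<^sub>1" "u \<in> H\<^sub>2"
    using bridge_endpoints_separated[OF assms(2) e(1)] bridge_endpoints_separated[OF assms(2)]
      assms(3) e(2,3) by blast
  then show ?thesis
    using that e(1) \<open>e = {v, u}\<close> by cases
qed

lemma is_2_conversion_set_bridge_side:
  assumes "cubic V E" "is_bridge V E e" "e = {a, b}"
    and "H \<in> components V (E - {e})" "a \<in> H" "is_2_conversion_set V E S"
  shows "is_2_conversion_set H (induced_edges (E - {e}) H) (S \<inter> H)"
proof (rule is_2_conversion_set_restrict[where a = a])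
  have "simple_graph V E"
    using assms(1) by (simp add: cubic_def)
  then show "finite V" "\<And>v. {v} \<notin> induced_edges (E - {e}) H"
    by (auto simp: simple_graph_def induced_edges_def simple_graph_no_loop)
  show "H \<subseteq> V"
    using Union_components[of V "E - {e}"] assms(4) by blast
  then show "\<And>v. v \<in> H \<Longrightarrow> degree V E v \<le> 3"
    using assms(1) by (auto simp: cubic_def)
  show "\<And>v. v \<in> H \<Longrightarrow> v \<noteq> a \<Longrightarrow> 3 \<le> degree H (induced_edges (E - {e}) H) v"
    "2 \<le> degree H (induced_edges (E - {e}) H) a"
    using degree_bridge_side[OF assms(1-5)] assms(5) by auto
qed (use assms(6) in \<open>auto simp: induced_edges_def\<close>)

lemma c2_le_card: "is_2_conversion_set V E S \<Longrightarrow> c2 V E \<le> card S"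
  unfolding c2_def by (rule Least_le) blast

lemma c2_attained: "\<exists>S. is_2_conversion_set V E S \<and> card S = c2 V E"
  unfolding c2_def
proof (rule LeastI_ex)
  have "is_2_conversion_set V E V"
    unfolding is_2_conversion_set_def by (auto intro: exI[of _ 0])
  then show "\<exists>n S. is_2_conversion_set V E S \<and> card S = n" by blast
qed

lemma c2_le_add:
  assumes "finite V" "V = H\<^sub>1 \<union> H\<^sub>2" "E\<^sub>1 \<subseteq> E" "E\<^sub>2 \<subseteq> E"
  shows "c2 V E \<le> c2 H\<^sub>1 E\<^sub>1 + c2 H\<^sub>2 E\<^sub>2"
proof -
  obtain S\<^sub>1 S\<^sub>2 where S: "is_2_conversion_set H\<^sub>1 E\<^sub>1 S\<^sub>1" "card S\<^sub>1 = c2 H\<^sub>1 E\<^sub>1"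
      "is_2_conversion_set H\<^sub>2 E\<^sub>2 S\<^sub>2" "card S\<^sub>2 = c2 H\<^sub>2 E\<^sub>2"
    using c2_attained by metis
  have "c2 V E \<le> card (S\<^sub>1 \<union> S\<^sub>2)"
    using is_2_conversion_set_Un[OF assms S(1,3)] by (rule c2_le_card)
  also have "\<dots> \<le> card S\<^sub>1 + card S\<^sub>2"
    by (rule card_Un_le)
  finally show ?thesis
    using S by simp
qed

lemma c2_add_le:
  assumes "finite V" "V = H\<^sub>1 \<union> H\<^sub>2" "H\<^sub>1 \<inter> H\<^sub>2 = {}"
    and "\<And>S. is_2_conversion_set V E S \<Longrightarrow> is_2_conversion_set H\<^sub>1 E\<^sub>1 (S \<inter> H\<^sub>1)"
    and "\<And>S. is_2_conversion_set V E S \<Longrightarrow> is_2_conversion_set H\<^sub>2 E\<^sub>2 (S \<inter> H\<^sub>2)"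
  shows "c2 H\<^sub>1 E\<^sub>1 + c2 H\<^sub>2 E\<^sub>2 \<le> c2 V E"
proof -
  obtain S where S: "is_2_conversion_set V E S" "card S = c2 V E"
    using c2_attained by blast
  have "S = (S \<inter> H\<^sub>1) \<union> (S \<inter> H\<^sub>2)"
    using S(1) assms(2) by (auto simp: is_2_conversion_set_def)
  then have "card S = card (S \<inter> H\<^sub>1) + card (S \<inter> H\<^sub>2)"
    using assms(1-3) by (metis card_Un_disjoint disjoint_iff finite_Int finite_Un Int_iff)
  then show ?thesis
    using S c2_le_card[OF assms(4)[OF S(1)]] c2_le_card[OF assms(5)[OF S(1)]] by linarith
qed

theorem lemma5p4:
  fixes V :: "'a set" and E :: "'a set set" and e :: "'a set" and H1 H2 :: "'a set"
  assumes "cubic V E"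
    and "is_bridge V E e"
    and "components V (E - {e}) = {H1, H2}"
    and "H1 \<noteq> H2"
  shows "c2 V E = c2 H1 (induced_edges (E - {e}) H1) + c2 H2 (induced_edges (E - {e}) H2)"
proof -
  have "simple_graph V E"
    using assms(1) by (simp add: cubic_def)
  then have "finite V"
    by (simp add: simple_graph_def)
  obtain a b where e: "e = {a, b}" "a \<in> H1" "b \<in> H2"
    using bridge_joins_components[OF \<open>simple_graph V E\<close> assms(2,3)] .
  have H: "H1 \<in> components V (E - {e})" "H2 \<in> components V (E - {e})"
    using assms(3) by auto
  have cover: "V = H1 \<union> H2"
    using Union_components[of V "E - {e}"] assms(3) by simp
  have disjoint: "H1 \<inter> H2 = {}"
    using components_disjoint[OF H assms(4)] .
  show ?thesis
  proof (rule antisym)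
    show "c2 V E \<le> c2 H1 (induced_edges (E - {e}) H1) + c2 H2 (induced_edges (E - {e}) H2)"
      using \<open>finite V\<close> cover by (rule c2_le_add) (auto simp: induced_edges_def)
    have "e = {b, a}"
      using e(1) by (simp add: insert_commute)
    then show "c2 H1 (induced_edges (E - {e}) H1) + c2 H2 (induced_edges (E - {e}) H2) \<le> c2 V E"
      using c2_add_le[OF \<open>finite V\<close> cover disjoint]
        is_2_conversion_set_bridge_side[OF assms(1,2) e(1) H(1) e(2)]
        is_2_conversion_set_bridge_side[OF assms(1,2) _ H(2) e(3)]
      by blast
  qed
qed

end
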